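(* Let $\alpha\in\mathbb{C}$ with $|\alpha|<1$ and $\phi(z)=\left(\dfrac{z-\alpha}{1-\overline\alpha z}\right)^2$. Then $$\omega_2(S(\phi))=\frac{1+2|\alpha|-|\alpha|^2}{2}.$$
   Context: $S(\phi)$ is the compression of the unilateral shift $Sf=zf$ on the Hardy space $\mathbb{H}^2$ of the unit disc to the model space $H(\phi)=\mathbb{H}^2\ominus\phi\mathbb{H}^2$: $S(\phi)f=P(zf)$, $P$ the orthogonal projection onto $H(\phi)$. $\omega_2$ is the numerical radius. *)

theory Defs
  imports "HOL-Analysis.Analysis"
begin

definition taylor_coeff :: "(complex \<Rightarrow> complex) \<Rightarrow> nat \<Rightarrow> complex" where
  "taylor_coeff f n = (deriv ^^ n) f 0 / fact n"

definition hardy2 :: "(complex \<Rightarrow> complex) set" where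
  "hardy2 = {f. f holomorphic_on ball 0 1 \<and> (\<forall>z. z \<notin> ball 0 1 \<longrightarrow> f z = 0) \<and>
                summable (\<lambda>n. (cmod (taylor_coeff f n))^2)}"

definition h2_inner :: "(complex \<Rightarrow> complex) \<Rightarrow> (complex \<Rightarrow> complex) \<Rightarrow> complex" where
  "h2_inner f g = (\<Sum>n. taylor_coeff f n * cnj (taylor_coeff g n))"

definition h2_norm :: "(complex \<Rightarrow> complex) \<Rightarrow> real" where
  "h2_norm f = sqrt (\<Sum>n. (cmod (taylor_coeff f n))^2)"

definition model_space :: "(complex \<Rightarrow> complex) \<Rightarrow> (complex \<Rightarrow> complex) set" where
  "model_space \<phi> = {f \<in> hardy2. \<forall>g \<in> hardy2. h2_inner f (\<lambda>z. \<phi> z * g z) = 0}"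

definition h2_proj :: "(complex \<Rightarrow> complex) set \<Rightarrow> (complex \<Rightarrow> complex) \<Rightarrow> (complex \<Rightarrow> complex)" where
  "h2_proj K h = (THE p. p \<in> K \<and> (\<forall>k \<in> K. h2_inner (\<lambda>z. h z - p z) k = 0))"

definition compressed_shift :: "(complex \<Rightarrow> complex) \<Rightarrow> (complex \<Rightarrow> complex) \<Rightarrow> (complex \<Rightarrow> complex)" where
  "compressed_shift \<phi> f = h2_proj (model_space \<phi>) (\<lambda>z. z * f z)"

definition numerical_radius ::
  "(complex \<Rightarrow> complex) set \<Rightarrow> ((complex \<Rightarrow> complex) \<Rightarrow> (complex \<Rightarrow> complex)) \<Rightarrow> real" where
  "numerical_radius K T = Sup {cmod (h2_inner (T f) f) | f. f \<in> K \<and> h2_norm f = 1}"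

end

theory Submission
  imports Defs "HOL-Complex_Analysis.Complex_Analysis"
begin

text \<open>For \<open>\<phi> = b\<^sub>\<alpha>\<^sup>2\<close> with \<open>b\<^sub>\<alpha> z = (z - \<alpha>) / (1 - cnj \<alpha> * z)\<close>, a function is orthogonal to
  \<open>\<phi> H\<^sup>2\<close> iff it is orthogonal to every \<open>(z - \<alpha>)\<^sup>2 z\<^sup>n\<close>, i.e. iff its Taylor coefficients satisfy
  the recurrence of a double pole at \<open>1 / cnj \<alpha>\<close>. Hence \<open>H(\<phi>)\<close> is two-dimensional, spanned by
  the reproducing kernels of \<open>f \<mapsto> f \<alpha>\<close> and \<open>f \<mapsto> f' \<alpha>\<close>, and its elements are determined by
  their value and derivative at \<alpha>. In the orthonormal basis \<open>e\<^sub>1 = sqrt (1 - \<bar>\<alpha>\<bar>\<^sup>2) / (1 - cnj \<alpha> z)\<close>,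
  \<open>e\<^sub>2 = b\<^sub>\<alpha> e\<^sub>1\<close> the compressed shift has matrix \<open>[[\<alpha>, 0], [1 - \<bar>\<alpha>\<bar>\<^sup>2, \<alpha>]]\<close>, so for a unit vector
  \<open>(x, y)\<close> the quadratic form is \<open>\<alpha> + (1 - \<bar>\<alpha>\<bar>\<^sup>2) x cnj y\<close>; as \<open>\<bar>x y\<bar> \<le> 1/2\<close> with equality for
  \<open>\<bar>x\<bar> = \<bar>y\<bar>\<close>, its maximal modulus is \<open>\<bar>\<alpha>\<bar> + (1 - \<bar>\<alpha>\<bar>\<^sup>2) / 2\<close>.\<close>

lemma taylor_coeff_deriv:
  "taylor_coeff (deriv f) n = of_nat (Suc n) * taylor_coeff f (Suc n)"
proof -
  have "(deriv ^^ n) (deriv f) = (deriv ^^ Suc n) f"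
    by (simp only: funpow_Suc_right o_def)
  moreover have "(of_nat (Suc n) :: complex) \<noteq> 0" "(fact n :: complex) \<noteq> 0"
    by (simp_all only: of_nat_eq_0_iff fact_nonzero) simp
  ultimately show ?thesis
    unfolding taylor_coeff_def fact_Suc of_nat_mult by (simp add: field_simps del: of_nat_Suc)
qed

lemma taylor_series_sums:
  assumes "f holomorphic_on ball 0 1" "w \<in> ball 0 1"
  shows "(\<lambda>n. taylor_coeff f n * w ^ n) sums f w"
  using holomorphic_power_series[OF assms] by (simp add: taylor_coeff_def)

lemma taylor_series_deriv_sums:
  assumes "f holomorphic_on ball 0 1" "w \<in> ball 0 1"
  shows "(\<lambda>n. taylor_coeff f n * (of_nat n * w ^ (n - 1))) sums deriv f w"
proof -
  have "deriv f holomorphic_on ball 0 1"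
    using assms(1) by (intro holomorphic_deriv) auto
  from taylor_series_sums[OF this assms(2)]
  have "(\<lambda>n. taylor_coeff f (Suc n) * (of_nat (Suc n) * w ^ (Suc n - 1))) sums deriv f w"
    by (simp add: taylor_coeff_deriv mult_ac)
  then show ?thesis
    by (subst (asm) sums_Suc_iff) simp
qed

lemma taylor_coeff_fps_expansion:
  assumes "f has_fps_expansion F" and "\<And>z. z \<in> ball 0 1 \<Longrightarrow> g z = f z"
  shows "taylor_coeff g n = F $ n"
proof -
  have "eventually (\<lambda>z. z \<in> ball (0::complex) 1) (nhds 0)"
    by (intro eventually_nhds_in_open) auto
  with assms have "g has_fps_expansion F"
    unfolding has_fps_expansion_def by (auto elim: eventually_elim2)
  then show ?thesis
    by (simp add: fps_nth_fps_expansion taylor_coeff_def)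
qed

lemma eq_if_taylor_coeff_eq:
  assumes "f holomorphic_on ball 0 1" "g holomorphic_on ball 0 1"
    and "\<And>z. z \<notin> ball 0 1 \<Longrightarrow> f z = g z"
    and "\<And>n. taylor_coeff f n = taylor_coeff g n"
  shows "f = g"
proof
  fix z
  show "f z = g z"
  proof (cases "z \<in> ball 0 1")
    case True
    then show ?thesis
      using taylor_series_sums[OF assms(1) True] taylor_series_sums[OF assms(2) True]
      by (simp add: assms(4) sums_iff)
  qed (use assms(3) in auto)
qed

lemma summable_power2_norm:
  fixes f :: "nat \<Rightarrow> 'a::real_normed_vector"
  assumes "summable (\<lambda>n. norm (f n))"
  shows "summable (\<lambda>n. (norm (f n))^2)"
proof -
  have "eventually (\<lambda>n. norm (f n) < 1) sequentially"
    using order_tendstoD(2)[OF summable_LIMSEQ_zero[OF assms]] by simp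
  then obtain N where N: "\<And>n. n \<ge> N \<Longrightarrow> norm (f n) < 1"
    unfolding eventually_sequentially by blast
  show ?thesis
  proof (rule summable_comparison_test'[OF assms])
    fix n assume "n \<ge> N"
    then show "norm ((norm (f n))^2) \<le> norm (f n)"
      using N[of n] by (simp add: power2_eq_square mult_left_le_one_le)
  qed
qed

lemma summable_of_nat_times_power_pred:
  fixes r :: real
  assumes "0 \<le> r" "r < 1"
  shows "summable (\<lambda>n. of_nat n * r ^ (n - 1))"
proof -
  have "summable (\<lambda>n. diffs (\<lambda>_. 1) n * r ^ n)"
    by (rule termdiff_converges[of r 1]) (use assms in \<open>simp_all add: summable_geometric\<close>)
  then show ?thesis
    by (subst summable_Suc_iff[symmetric]) (simp add: diffs_def)
qed

lemma one_minus_cnj_mult_nonzero: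
  assumes "cmod \<alpha> < 1" "z \<in> ball 0 1"
  shows "1 - cnj \<alpha> * z \<noteq> 0"
proof
  assume "1 - cnj \<alpha> * z = 0"
  then have "cmod \<alpha> * cmod z = 1"
    by (metis complex_mod_cnj eq_iff_diff_eq_0 norm_mult norm_one)
  moreover have "cmod \<alpha> * cmod z < 1"
    using assms mult_left_le_one_le[of "cmod z" "cmod \<alpha>"] by simp
  ultimately show False by simp
qed

text \<open>\<open>kernel_comb \<alpha> a b z = a / (1 - cnj \<alpha> * z) + b * z / (1 - cnj \<alpha> * z)^2\<close>: a combination of
  the reproducing kernels of \<open>f \<mapsto> f \<alpha>\<close> and \<open>f \<mapsto> f' \<alpha>\<close>.\<close>

definition kernel_comb :: "complex \<Rightarrow> complex \<Rightarrow> complex \<Rightarrow> complex \<Rightarrow> complex" where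
  "kernel_comb \<alpha> a b z = (a * (1 - cnj \<alpha> * z) + b * z) / (1 - cnj \<alpha> * z)^2"

definition model_fun :: "complex \<Rightarrow> complex \<Rightarrow> complex \<Rightarrow> complex \<Rightarrow> complex" where
  "model_fun \<alpha> a b z = (if z \<in> ball 0 1 then kernel_comb \<alpha> a b z else 0)"

definition model_coeff :: "complex \<Rightarrow> complex \<Rightarrow> complex \<Rightarrow> nat \<Rightarrow> complex" where
  "model_coeff \<alpha> a b n = a * cnj \<alpha> ^ n + b * of_nat n * cnj \<alpha> ^ (n - 1)"

lemma model_coeff_recurrence:
  "model_coeff \<alpha> a b (Suc (Suc n)) - 2 * cnj \<alpha> * model_coeff \<alpha> a b (Suc n)
     + cnj \<alpha> ^ 2 * model_coeff \<alpha> a b n = 0"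
  by (cases n) (simp_all add: model_coeff_def power2_eq_square algebra_simps)

lemma one_minus_X_sq_times_X_power:
  "(1 - fps_const (\<beta>::complex) * fps_X)^2 * fps_X^n =
     fps_X^n - fps_const (2 * \<beta>) * fps_X^(Suc n) + fps_const (\<beta>^2) * fps_X^(Suc (Suc n))"
proof -
  have "fps_const (2 * \<beta>) = 2 * fps_const \<beta>" "fps_const (\<beta>^2) = fps_const \<beta> * fps_const \<beta>"
    by (simp_all add: fps_numeral_fps_const power2_eq_square)
  then show ?thesis
    by (simp add: power2_eq_square algebra_simps)
qed

lemma X_minus_const_sq_times_X_power:
  "(fps_X - fps_const (\<alpha>::complex))^2 * fps_X^n =
     fps_X^(Suc (Suc n)) - fps_const (2 * \<alpha>) * fps_X^(Suc n) + fps_const (\<alpha>^2) * fps_X^n"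
proof -
  have "fps_const (2 * \<alpha>) = 2 * fps_const \<alpha>" "fps_const (\<alpha>^2) = fps_const \<alpha> * fps_const \<alpha>"
    by (simp_all add: fps_numeral_fps_const power2_eq_square)
  then show ?thesis
    by (simp add: power2_eq_square algebra_simps)
qed

lemma Abs_fps_model_coeff_times_denominator:
  "Abs_fps (model_coeff \<alpha> a b) * (1 - fps_const (cnj \<alpha>) * fps_X)^2
     = fps_const a * (1 - fps_const (cnj \<alpha>) * fps_X) + fps_const b * fps_X"
  (is "?C * ?D = ?N")
proof -
  have "?D = 1 - 2 * fps_const (cnj \<alpha>) * fps_X^1 + (fps_const (cnj \<alpha>))^2 * fps_X^2"
    by (simp add: power2_eq_square algebra_simps)
  then have D: "?D = 1 - fps_const (2 * cnj \<alpha>) * fps_X^1 + fps_const (cnj \<alpha>^2) * fps_X^2"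
    by (simp add: fps_numeral_fps_const)
  have "?C * ?D = ?C - fps_const (2 * cnj \<alpha>) * (?C * fps_X^1) + fps_const (cnj \<alpha>^2) * (?C * fps_X^2)"
    unfolding D by (simp add: algebra_simps)
  also have "\<dots> = ?N"
  proof (rule fps_ext)
    fix n
    consider "n = 0" | "n = 1" | k where "n = Suc (Suc k)"
      by (metis One_nat_def not0_implies_Suc)
    then show "(?C - fps_const (2 * cnj \<alpha>) * (?C * fps_X^1) + fps_const (cnj \<alpha>^2) * (?C * fps_X^2)) $ n
               = ?N $ n"
    proof cases
      case (3 k)
      then show ?thesis
        using model_coeff_recurrence[of \<alpha> a b k] by (simp add: fps_X_power_mult_right_nth)
    qed (simp_all add: model_coeff_def fps_X_power_mult_right_nth algebra_simps)
  qed
  finally show ?thesis .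
qed

lemma kernel_comb_has_fps_expansion:
  "kernel_comb \<alpha> a b has_fps_expansion Abs_fps (model_coeff \<alpha> a b)"
proof -
  define D where "D = (1 - fps_const (cnj \<alpha>) * fps_X)^2"
  define N where "N = fps_const a * (1 - fps_const (cnj \<alpha>) * fps_X) + fps_const b * fps_X"
  have D0: "fps_nth D 0 \<noteq> 0"
    by (simp add: D_def power2_eq_square)
  have "(\<lambda>z. (a * (1 - cnj \<alpha> * z) + b * z) / (1 - cnj \<alpha> * z)^2) has_fps_expansion N / D"
    unfolding N_def D_def power2_eq_square
    by (intro has_fps_expansion_divide' fps_expansion_intros) (simp add: D0[unfolded D_def power2_eq_square])
  moreover have "N / D = Abs_fps (model_coeff \<alpha> a b) * D * inverse D"
    using D0 Abs_fps_model_coeff_times_denominator[of \<alpha> a b] by (simp add: fps_divide_unit D_def N_def)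
  then have "N / D = Abs_fps (model_coeff \<alpha> a b)"
    using inverse_mult_eq_1'[OF D0] by (simp add: mult.assoc)
  ultimately show ?thesis
    by (simp add: kernel_comb_def[abs_def])
qed

lemma taylor_coeff_model_fun: "taylor_coeff (model_fun \<alpha> a b) n = model_coeff \<alpha> a b n"
  using taylor_coeff_fps_expansion[OF kernel_comb_has_fps_expansion] by (simp add: model_fun_def)

lemma holomorphic_kernel_comb:
  assumes "cmod \<alpha> < 1"
  shows "kernel_comb \<alpha> a b holomorphic_on ball 0 1"
  unfolding kernel_comb_def[abs_def]
  using one_minus_cnj_mult_nonzero[OF assms] by (intro holomorphic_intros) auto

lemma holomorphic_model_fun:
  assumes "cmod \<alpha> < 1"
  shows "model_fun \<alpha> a b holomorphic_on ball 0 1"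
  using holomorphic_kernel_comb[OF assms]
  by (rule holomorphic_transform) (simp add: model_fun_def)

lemma summable_norm_model_coeff:
  assumes "cmod \<alpha> < 1"
  shows "summable (\<lambda>n. norm (model_coeff \<alpha> a b n))"
proof (rule summable_comparison_test)
  show "summable (\<lambda>n. cmod a * cmod \<alpha> ^ n + cmod b * (of_nat n * cmod \<alpha> ^ (n - 1)))"
    using assms
    by (intro summable_add summable_mult summable_geometric summable_of_nat_times_power_pred) auto
  show "\<exists>N. \<forall>n\<ge>N. norm (norm (model_coeff \<alpha> a b n))
          \<le> cmod a * cmod \<alpha> ^ n + cmod b * (of_nat n * cmod \<alpha> ^ (n - 1))"
    unfolding model_coeff_def
    by (intro exI allI impI, simp, rule order.trans[OF norm_triangle_ineq]) (simp add: norm_mult norm_power)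
qed

lemma model_fun_in_hardy2:
  assumes "cmod \<alpha> < 1"
  shows "model_fun \<alpha> a b \<in> hardy2"
  unfolding hardy2_def
  using holomorphic_model_fun[OF assms] summable_power2_norm[OF summable_norm_model_coeff[OF assms]]
  by (simp add: model_fun_def taylor_coeff_model_fun)

lemma model_coeff_inner_sums:
  assumes "cmod \<alpha> < 1" "f holomorphic_on ball 0 1"
  shows "(\<lambda>n. taylor_coeff f n * cnj (model_coeff \<alpha> a b n)) sums (cnj a * f \<alpha> + cnj b * deriv f \<alpha>)"
proof -
  have \<alpha>: "\<alpha> \<in> ball 0 1"
    using assms(1) by simp
  have "(\<lambda>n. cnj a * (taylor_coeff f n * \<alpha> ^ n) + cnj b * (taylor_coeff f n * (of_nat n * \<alpha> ^ (n - 1))))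
        sums (cnj a * f \<alpha> + cnj b * deriv f \<alpha>)"
    by (intro sums_add sums_mult taylor_series_sums taylor_series_deriv_sums assms \<alpha>)
  then show ?thesis
    by (simp add: model_coeff_def algebra_simps)
qed

lemma h2_inner_model_fun_right:
  assumes "cmod \<alpha> < 1" "f holomorphic_on ball 0 1"
  shows "h2_inner f (model_fun \<alpha> a b) = cnj a * f \<alpha> + cnj b * deriv f \<alpha>"
  using sums_unique[OF model_coeff_inner_sums[OF assms]]
  by (simp add: h2_inner_def taylor_coeff_model_fun)

lemma h2_inner_model_fun_left:
  assumes "cmod \<alpha> < 1" "f holomorphic_on ball 0 1"
  shows "h2_inner (model_fun \<alpha> a b) f = a * cnj (f \<alpha>) + b * cnj (deriv f \<alpha>)"
proof -
  have "(\<lambda>n. cnj (taylor_coeff f n * cnj (model_coeff \<alpha> a b n))) sums cnj (cnj a * f \<alpha> + cnj b * deriv f \<alpha>)"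
    using model_coeff_inner_sums[OF assms] by (simp only: sums_cnj)
  then show ?thesis
    by (simp add: h2_inner_def taylor_coeff_model_fun sums_iff mult.commute)
qed

lemma kernel_comb_has_field_derivative:
  assumes "1 - cnj \<alpha> * z \<noteq> 0"
  shows "(kernel_comb \<alpha> a b has_field_derivative
           (a * cnj \<alpha> * (1 - cnj \<alpha> * z) + b * (1 + cnj \<alpha> * z)) / (1 - cnj \<alpha> * z)^3) (at z)"
proof -
  define u where "u = 1 - cnj \<alpha> * z"
  have "u \<noteq> 0"
    using assms by (simp add: u_def)
  have "((\<lambda>z. a * (1 - cnj \<alpha> * z) + b * z) has_field_derivative (b - a * cnj \<alpha>)) (at z)"
       "((\<lambda>z. (1 - cnj \<alpha> * z)^2) has_field_derivative (- 2 * cnj \<alpha> * u)) (at z)"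
    unfolding power2_eq_square by (auto intro!: derivative_eq_intros simp: algebra_simps u_def)
  from DERIV_divide[OF this] \<open>u \<noteq> 0\<close>
  have "(kernel_comb \<alpha> a b has_field_derivative
          ((b - a * cnj \<alpha>) * u^2 - (a * u + b * z) * (- 2 * cnj \<alpha> * u)) / (u^2 * u^2)) (at z)"
    unfolding kernel_comb_def[abs_def] by (simp add: u_def)
  moreover have "(b - a * cnj \<alpha>) * u^2 - (a * u + b * z) * (- 2 * cnj \<alpha> * u)
                 = u * (a * cnj \<alpha> * u + b * (1 + cnj \<alpha> * z))"
    by (simp add: u_def algebra_simps power2_eq_square)
  moreover have "u * (a * cnj \<alpha> * u + b * (1 + cnj \<alpha> * z)) / (u^2 * u^2)
                 = (a * cnj \<alpha> * u + b * (1 + cnj \<alpha> * z)) / u^3"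
    using \<open>u \<noteq> 0\<close> by (simp add: field_simps power2_eq_square power3_eq_cube)
  ultimately show ?thesis
    by (simp add: u_def)
qed

lemma deriv_model_fun:
  assumes "cmod \<alpha> < 1" "z \<in> ball 0 1"
  shows "deriv (model_fun \<alpha> a b) z
           = (a * cnj \<alpha> * (1 - cnj \<alpha> * z) + b * (1 + cnj \<alpha> * z)) / (1 - cnj \<alpha> * z)^3"
proof -
  have "eventually (\<lambda>w. model_fun \<alpha> a b w = kernel_comb \<alpha> a b w) (nhds z)"
    using eventually_nhds_in_open[of "ball 0 1" z] assms(2)
    by (auto elim!: eventually_mono simp: model_fun_def)
  then have "deriv (model_fun \<alpha> a b) z = deriv (kernel_comb \<alpha> a b) z"
    by (rule deriv_cong_ev) simp
  then show ?thesis
    using DERIV_imp_deriv[OF kernel_comb_has_field_derivative[OF one_minus_cnj_mult_nonzero[OF assms]]]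
    by simp
qed

abbreviation blaschke_sq :: "complex \<Rightarrow> complex \<Rightarrow> complex" where
  "blaschke_sq \<alpha> \<equiv> (\<lambda>z. ((z - \<alpha>) / (1 - cnj \<alpha> * z))^2)"

lemma holomorphic_blaschke_sq:
  assumes "cmod \<alpha> < 1"
  shows "blaschke_sq \<alpha> holomorphic_on ball 0 1"
  using one_minus_cnj_mult_nonzero[OF assms] by (intro holomorphic_intros) auto

lemma deriv_blaschke_sq_mult:
  assumes "cmod \<alpha> < 1" "g holomorphic_on ball 0 1"
  shows "deriv (\<lambda>z. blaschke_sq \<alpha> z * g z) \<alpha> = 0"
proof -
  have \<alpha>: "\<alpha> \<in> ball 0 1"
    using assms(1) by simp
  have "1 - cnj \<alpha> * \<alpha> \<noteq> 0"
    using one_minus_cnj_mult_nonzero[OF assms(1) \<alpha>] .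
  then have "(blaschke_sq \<alpha> has_field_derivative 0) (at \<alpha>)"
    by (auto intro!: derivative_eq_intros)
  moreover have "(g has_field_derivative deriv g \<alpha>) (at \<alpha>)"
    using holomorphic_derivI[OF assms(2) _ \<alpha>] by simp
  ultimately have "((\<lambda>z. blaschke_sq \<alpha> z * g z) has_field_derivative
                     blaschke_sq \<alpha> \<alpha> * deriv g \<alpha> + 0 * g \<alpha>) (at \<alpha>)"
    by (rule DERIV_mult')
  then show ?thesis
    by (intro DERIV_imp_deriv) simp
qed

lemma model_fun_in_model_space:
  assumes "cmod \<alpha> < 1"
  shows "model_fun \<alpha> a b \<in> model_space (blaschke_sq \<alpha>)"
proof -
  have "h2_inner (model_fun \<alpha> a b) (\<lambda>z. blaschke_sq \<alpha> z * g z) = 0" if "g \<in> hardy2" for g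
  proof -
    have g: "g holomorphic_on ball 0 1"
      using that by (simp add: hardy2_def)
    have "(\<lambda>z. blaschke_sq \<alpha> z * g z) holomorphic_on ball 0 1"
      by (intro holomorphic_on_mult holomorphic_blaschke_sq assms g)
    then show ?thesis
      using h2_inner_model_fun_left[OF assms] deriv_blaschke_sq_mult[OF assms g] by simp
  qed
  then show ?thesis
    unfolding model_space_def using model_fun_in_hardy2[OF assms] by blast
qed

text \<open>Multiplying by \<open>(1 - cnj \<alpha> * z)^2\<close> clears the denominator of \<open>blaschke_sq \<alpha>\<close>, so that
  \<open>blaschke_sq \<alpha> * cleared_monomial \<alpha> n\<close> is the polynomial \<open>(z - \<alpha>)^2 * z^n\<close>.\<close>

definition cleared_monomial :: "complex \<Rightarrow> nat \<Rightarrow> complex \<Rightarrow> complex" where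
  "cleared_monomial \<alpha> n z = (if z \<in> ball 0 1 then (1 - cnj \<alpha> * z)^2 * z^n else 0)"

lemma taylor_coeff_cleared_monomial:
  "taylor_coeff (cleared_monomial \<alpha> n) m =
     (if m = n then 1 else 0) - 2 * cnj \<alpha> * (if m = Suc n then 1 else 0)
       + cnj \<alpha>^2 * (if m = Suc (Suc n) then 1 else 0)"
proof -
  have "(\<lambda>z. (1 - cnj \<alpha> * z)^2 * z^n) has_fps_expansion (1 - fps_const (cnj \<alpha>) * fps_X)^2 * fps_X^n"
    unfolding power2_eq_square by (intro fps_expansion_intros)
  from taylor_coeff_fps_expansion[OF this]
  show ?thesis
    by (simp add: cleared_monomial_def one_minus_X_sq_times_X_power del: power_Suc)
qed

lemma cleared_monomial_in_hardy2: "cleared_monomial \<alpha> n \<in> hardy2"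
proof -
  have "(\<lambda>z. (1 - cnj \<alpha> * z)^2 * z^n) holomorphic_on ball 0 1"
    by (intro holomorphic_intros)
  then have "cleared_monomial \<alpha> n holomorphic_on ball 0 1"
    by (rule holomorphic_transform) (simp add: cleared_monomial_def)
  moreover have "summable (\<lambda>m. (cmod (taylor_coeff (cleared_monomial \<alpha> n) m))^2)"
    by (rule summable_finite[of "{n, Suc n, Suc (Suc n)}"]) (auto simp: taylor_coeff_cleared_monomial)
  ultimately show ?thesis
    by (simp add: hardy2_def cleared_monomial_def)
qed

lemma taylor_coeff_blaschke_sq_mult_cleared_monomial:
  assumes "cmod \<alpha> < 1"
  shows "taylor_coeff (\<lambda>z. blaschke_sq \<alpha> z * cleared_monomial \<alpha> n z) m =
     (if m = Suc (Suc n) then 1 else 0) - 2 * \<alpha> * (if m = Suc n then 1 else 0)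
       + \<alpha>^2 * (if m = n then 1 else 0)"
proof -
  have "(\<lambda>z. (z - \<alpha>)^2 * z^n) has_fps_expansion (fps_X - fps_const \<alpha>)^2 * fps_X^n"
    unfolding power2_eq_square by (intro fps_expansion_intros)
  moreover have "blaschke_sq \<alpha> z * cleared_monomial \<alpha> n z = (z - \<alpha>)^2 * z^n" if "z \<in> ball 0 1" for z
    using one_minus_cnj_mult_nonzero[OF assms that] that
    by (simp add: cleared_monomial_def power_divide)
  ultimately have "taylor_coeff (\<lambda>z. blaschke_sq \<alpha> z * cleared_monomial \<alpha> n z) m
                     = ((fps_X - fps_const \<alpha>)^2 * fps_X^n) $ m"
    by (rule taylor_coeff_fps_expansion)
  then show ?thesis
    by (simp add: X_minus_const_sq_times_X_power del: power_Suc)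
qed

lemma model_space_coeff_recurrence:
  assumes "cmod \<alpha> < 1" "f \<in> model_space (blaschke_sq \<alpha>)"
  shows "taylor_coeff f (Suc (Suc n)) - 2 * cnj \<alpha> * taylor_coeff f (Suc n) + cnj \<alpha>^2 * taylor_coeff f n = 0"
proof -
  define c where "c = taylor_coeff (\<lambda>z. blaschke_sq \<alpha> z * cleared_monomial \<alpha> n z)"
  note c = taylor_coeff_blaschke_sq_mult_cleared_monomial[OF assms(1), of n, folded c_def]
  have "taylor_coeff f (Suc (Suc n)) - 2 * cnj \<alpha> * taylor_coeff f (Suc n) + cnj \<alpha>^2 * taylor_coeff f n
          = (\<Sum>m\<in>{n, Suc n, Suc (Suc n)}. taylor_coeff f m * cnj (c m))"
    by (simp add: c algebra_simps)
  also have "\<dots> = h2_inner f (\<lambda>z. blaschke_sq \<alpha> z * cleared_monomial \<alpha> n z)"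
    unfolding h2_inner_def c_def[symmetric] by (rule suminf_finite[symmetric]) (auto simp: c)
  also have "\<dots> = 0"
    using assms(2) cleared_monomial_in_hardy2 unfolding model_space_def by blast
  finally show ?thesis .
qed

lemma model_space_eq_model_fun:
  assumes "cmod \<alpha> < 1" "f \<in> model_space (blaschke_sq \<alpha>)"
  shows "f = model_fun \<alpha> (taylor_coeff f 0) (taylor_coeff f 1 - cnj \<alpha> * taylor_coeff f 0)"
    (is "f = model_fun \<alpha> ?a ?b")
proof (rule eq_if_taylor_coeff_eq)
  have "f \<in> hardy2"
    using assms(2) by (simp add: model_space_def)
  then show "f holomorphic_on ball 0 1" "\<And>z. z \<notin> ball 0 1 \<Longrightarrow> f z = model_fun \<alpha> ?a ?b z"
    by (simp_all add: hardy2_def model_fun_def)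
  show "model_fun \<alpha> ?a ?b holomorphic_on ball 0 1"
    using holomorphic_model_fun[OF assms(1)] .
  show "taylor_coeff f n = taylor_coeff (model_fun \<alpha> ?a ?b) n" for n
    unfolding taylor_coeff_model_fun
  proof (induction n rule: induct_nat_012)
    case (ge2 k)
    have "taylor_coeff f (Suc (Suc k)) = 2 * cnj \<alpha> * taylor_coeff f (Suc k) - cnj \<alpha>^2 * taylor_coeff f k"
      using model_space_coeff_recurrence[OF assms, of k] by (simp add: algebra_simps)
    also have "\<dots> = 2 * cnj \<alpha> * model_coeff \<alpha> ?a ?b (Suc k) - cnj \<alpha>^2 * model_coeff \<alpha> ?a ?b k"
      using ge2 by simp
    also have "\<dots> = model_coeff \<alpha> ?a ?b (Suc (Suc k))"
      using model_coeff_recurrence[of \<alpha> ?a ?b k] by (simp add: algebra_simps)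
    finally show ?case .
  qed (simp_all add: model_coeff_def)
qed

lemma model_space_blaschke_sq_iff:
  assumes "cmod \<alpha> < 1"
  shows "f \<in> model_space (blaschke_sq \<alpha>) \<longleftrightarrow> (\<exists>a b. f = model_fun \<alpha> a b)"
  using model_space_eq_model_fun[OF assms] model_fun_in_model_space[OF assms] by blast

definition defect :: "complex \<Rightarrow> real" where
  "defect \<alpha> = 1 - (cmod \<alpha>)^2"

text \<open>\<open>model_vec \<alpha> x y = x * e\<^sub>1 + y * e\<^sub>2\<close> for the orthonormal basis of the model space formed by
  the normalised kernel \<open>e\<^sub>1 z = sqrt (defect \<alpha>) / (1 - cnj \<alpha> * z)\<close> and
  \<open>e\<^sub>2 z = (z - \<alpha>) / (1 - cnj \<alpha> * z) * e\<^sub>1 z\<close>.\<close>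

definition model_vec :: "complex \<Rightarrow> complex \<Rightarrow> complex \<Rightarrow> complex \<Rightarrow> complex" where
  "model_vec \<alpha> x y = model_fun \<alpha> (of_real (sqrt (defect \<alpha>)) * (x - y * \<alpha>))
                                   (of_real (sqrt (defect \<alpha>) * defect \<alpha>) * y)"

lemma defect_pos: "cmod \<alpha> < 1 \<Longrightarrow> defect \<alpha> > 0"
  unfolding defect_def by (simp add: abs_square_less_1)

lemma cnj_mult_self_eq_defect: "cnj \<alpha> * \<alpha> = 1 - of_real (defect \<alpha>)"
  unfolding defect_def using complex_norm_square[of \<alpha>] by (simp add: mult.commute)

lemma model_fun_at_center:
  "cmod \<alpha> < 1 \<Longrightarrow> model_fun \<alpha> a b \<alpha> = (a * of_real (defect \<alpha>) + b * \<alpha>) / of_real (defect \<alpha>)^2"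
  by (simp add: model_fun_def kernel_comb_def cnj_mult_self_eq_defect)

lemma deriv_model_fun_at_center:
  "cmod \<alpha> < 1 \<Longrightarrow> deriv (model_fun \<alpha> a b) \<alpha> =
     (a * cnj \<alpha> * of_real (defect \<alpha>) + b * (1 + cnj \<alpha> * \<alpha>)) / of_real (defect \<alpha>)^3"
  using deriv_model_fun[of \<alpha> \<alpha> a b] by (simp add: cnj_mult_self_eq_defect)

lemma model_fun_jet_inj:
  assumes "cmod \<alpha> < 1"
    and "model_fun \<alpha> a b \<alpha> = model_fun \<alpha> a' b' \<alpha>"
    and "deriv (model_fun \<alpha> a b) \<alpha> = deriv (model_fun \<alpha> a' b') \<alpha>"
  shows "a = a' \<and> b = b'"
proof -
  define c where "c = (of_real (defect \<alpha>) :: complex)"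
  have "c \<noteq> 0"
    using defect_pos[OF assms(1)] by (simp add: c_def)
  have val: "a * c + b * \<alpha> = a' * c + b' * \<alpha>"
    using assms(2) \<open>c \<noteq> 0\<close> unfolding model_fun_at_center[OF assms(1)] c_def[symmetric]
    by (simp add: divide_simps)
  have der: "a * cnj \<alpha> * c + b * (1 + cnj \<alpha> * \<alpha>) = a' * cnj \<alpha> * c + b' * (1 + cnj \<alpha> * \<alpha>)"
    using assms(3) \<open>c \<noteq> 0\<close> unfolding deriv_model_fun_at_center[OF assms(1)] c_def[symmetric]
    by (simp add: divide_simps)
  have "b - b' = (a * cnj \<alpha> * c + b * (1 + cnj \<alpha> * \<alpha>) - (a' * cnj \<alpha> * c + b' * (1 + cnj \<alpha> * \<alpha>)))
                   - cnj \<alpha> * ((a * c + b * \<alpha>) - (a' * c + b' * \<alpha>))"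
    by (simp add: algebra_simps)
  then have "b = b'"
    using val der by simp
  with val \<open>c \<noteq> 0\<close> show ?thesis
    by simp
qed

lemma model_vec_at_center:
  assumes "cmod \<alpha> < 1"
  shows "model_vec \<alpha> x y \<alpha> = of_real (sqrt (defect \<alpha>)) * x / of_real (defect \<alpha>)"
proof -
  define c where "c = (of_real (defect \<alpha>) :: complex)"
  define T where "T = (of_real (sqrt (defect \<alpha>)) :: complex)"
  have "c \<noteq> 0"
    using defect_pos[OF assms] by (simp add: c_def)
  have "model_vec \<alpha> x y \<alpha> = (T * (x - y * \<alpha>) * c + T * c * y * \<alpha>) / c^2"
    unfolding model_vec_def model_fun_at_center[OF assms] by (simp add: c_def T_def)
  also have "\<dots> = T * x / c"
    using \<open>c \<noteq> 0\<close> by (simp add: field_simps power2_eq_square)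
  finally show ?thesis
    by (simp add: c_def T_def)
qed

lemma deriv_model_vec_at_center:
  assumes "cmod \<alpha> < 1"
  shows "deriv (model_vec \<alpha> x y) \<alpha> = of_real (sqrt (defect \<alpha>)) * (x * cnj \<alpha> + y) / of_real (defect \<alpha>)^2"
proof -
  define c where "c = (of_real (defect \<alpha>) :: complex)"
  define T where "T = (of_real (sqrt (defect \<alpha>)) :: complex)"
  have "c \<noteq> 0"
    using defect_pos[OF assms] by (simp add: c_def)
  have "deriv (model_vec \<alpha> x y) \<alpha> = (T * (x - y * \<alpha>) * cnj \<alpha> * c + T * c * y * (1 + cnj \<alpha> * \<alpha>)) / c^3"
    unfolding model_vec_def deriv_model_fun_at_center[OF assms] by (simp add: c_def T_def)
  also have "\<dots> = T * (x * cnj \<alpha> + y) / c^2"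
    using \<open>c \<noteq> 0\<close> by (simp add: field_simps power2_eq_square power3_eq_cube)
  finally show ?thesis
    by (simp add: c_def T_def)
qed

lemma h2_inner_model_vec:
  assumes "cmod \<alpha> < 1"
  shows "h2_inner (model_vec \<alpha> x' y') (model_vec \<alpha> x y) = cnj x * x' + cnj y * y'"
proof -
  define c where "c = (of_real (defect \<alpha>) :: complex)"
  define T where "T = (of_real (sqrt (defect \<alpha>)) :: complex)"
  have "c \<noteq> 0" "T * T = c"
    using defect_pos[OF assms] by (simp_all add: c_def T_def flip: of_real_mult)
  have "model_vec \<alpha> x' y' holomorphic_on ball 0 1"
    unfolding model_vec_def by (rule holomorphic_model_fun[OF assms])
  then have "h2_inner (model_vec \<alpha> x' y') (model_vec \<alpha> x y)
      = cnj (T * (x - y * \<alpha>)) * model_vec \<alpha> x' y' \<alpha> + cnj (T * c * y) * deriv (model_vec \<alpha> x' y') \<alpha>"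
    unfolding model_vec_def[of \<alpha> x y] T_def c_def of_real_mult by (rule h2_inner_model_fun_right[OF assms])
  also have "\<dots> = T * (cnj x - cnj y * cnj \<alpha>) * (T * x' / c) + T * c * cnj y * (T * (x' * cnj \<alpha> + y') / c^2)"
    unfolding model_vec_at_center[OF assms] deriv_model_vec_at_center[OF assms]
    by (simp add: c_def T_def algebra_simps)
  also have "\<dots> = (T * T / c) * (cnj x * x' + cnj y * y')"
    using \<open>c \<noteq> 0\<close> by (simp add: field_simps power2_eq_square)
  finally show ?thesis
    using \<open>c \<noteq> 0\<close> \<open>T * T = c\<close> by simp
qed

lemma h2_norm_model_vec:
  assumes "cmod \<alpha> < 1"
  shows "h2_norm (model_vec \<alpha> x y) = sqrt ((cmod x)^2 + (cmod y)^2)"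
proof -
  define C where "C = taylor_coeff (model_vec \<alpha> x y)"
  have "summable (\<lambda>n. (cmod (C n))^2)"
    unfolding C_def model_vec_def taylor_coeff_model_fun
    by (rule summable_power2_norm[OF summable_norm_model_coeff[OF assms]])
  then have "(\<lambda>n. complex_of_real ((cmod (C n))^2)) sums complex_of_real (\<Sum>n. (cmod (C n))^2)"
    by (rule sums_of_real[OF summable_sums])
  then have "(\<lambda>n. C n * cnj (C n)) sums complex_of_real (\<Sum>n. (cmod (C n))^2)"
    by (simp only: complex_norm_square)
  then have "complex_of_real (\<Sum>n. (cmod (C n))^2) = h2_inner (model_vec \<alpha> x y) (model_vec \<alpha> x y)"
    unfolding h2_inner_def C_def by (simp add: sums_iff)
  also have "\<dots> = complex_of_real ((cmod x)^2 + (cmod y)^2)"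
    unfolding h2_inner_model_vec[OF assms] by (simp only: of_real_add complex_norm_square mult.commute)
  finally show ?thesis
    unfolding h2_norm_def C_def of_real_eq_iff by simp
qed

lemma model_fun_eq_model_vec:
  assumes "cmod \<alpha> < 1"
  shows "\<exists>x y. model_fun \<alpha> a b = model_vec \<alpha> x y"
proof -
  define T where "T = (of_real (sqrt (defect \<alpha>)) :: complex)"
  define c where "c = (of_real (defect \<alpha>) :: complex)"
  have "T \<noteq> 0" "c \<noteq> 0"
    using defect_pos[OF assms] by (simp_all add: T_def c_def)
  then have "T * (a / T + b / (T * c) * \<alpha> - b / (T * c) * \<alpha>) = a" "T * c * (b / (T * c)) = b"
    by simp_all
  then have "model_fun \<alpha> a b = model_vec \<alpha> (a / T + b / (T * c) * \<alpha>) (b / (T * c))"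
    unfolding model_vec_def of_real_mult T_def[symmetric] c_def[symmetric] by simp
  then show ?thesis
    by blast
qed

lemma model_space_blaschke_sq_iff_model_vec:
  assumes "cmod \<alpha> < 1"
  shows "f \<in> model_space (blaschke_sq \<alpha>) \<longleftrightarrow> (\<exists>x y. f = model_vec \<alpha> x y)"
  using model_space_blaschke_sq_iff[OF assms] model_fun_eq_model_vec[OF assms]
  unfolding model_vec_def by metis

lemma h2_proj_eqI:
  assumes "p \<in> K" "\<forall>k\<in>K. h2_inner (\<lambda>z. h z - p z) k = 0"
    and "\<And>q. q \<in> K \<Longrightarrow> \<forall>k\<in>K. h2_inner (\<lambda>z. h z - q z) k = 0 \<Longrightarrow> q = p"
  shows "h2_proj K h = p"
  unfolding h2_proj_def
proof (rule the_equality)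
  show "p \<in> K \<and> (\<forall>k\<in>K. h2_inner (\<lambda>z. h z - p z) k = 0)"
    using assms(1,2) ..
qed (use assms(3) in blast)

lemma deriv_mult_id_minus:
  assumes "open S" "f holomorphic_on S" "g holomorphic_on S" "w \<in> S"
  shows "deriv (\<lambda>z. z * f z - g z) w = f w + w * deriv f w - deriv g w"
proof -
  have "(f has_field_derivative deriv f w) (at w)" "(g has_field_derivative deriv g w) (at w)"
    using holomorphic_derivI assms by blast+
  then have "((\<lambda>z. z * f z - g z) has_field_derivative (w * deriv f w + 1 * f w) - deriv g w) (at w)"
    by (intro DERIV_diff DERIV_mult' DERIV_ident)
  then show ?thesis
    by (intro DERIV_imp_deriv) (simp add: algebra_simps)
qed

lemma model_space_jet_inj:
  assumes "cmod \<alpha> < 1" "p \<in> model_space (blaschke_sq \<alpha>)" "q \<in> model_space (blaschke_sq \<alpha>)"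
    and "p \<alpha> = q \<alpha>" "deriv p \<alpha> = deriv q \<alpha>"
  shows "p = q"
proof -
  obtain a b a' b' where "p = model_fun \<alpha> a b" "q = model_fun \<alpha> a' b'"
    using assms(2,3) unfolding model_space_blaschke_sq_iff[OF assms(1)] by blast
  then show ?thesis
    using model_fun_jet_inj[OF assms(1), of a b a' b'] assms(4,5) by simp
qed

lemma shift_minus_orthogonal_model_space_iff:
  assumes "cmod \<alpha> < 1" "f holomorphic_on ball 0 1" "p holomorphic_on ball 0 1"
  shows "(\<forall>k\<in>model_space (blaschke_sq \<alpha>). h2_inner (\<lambda>z. z * f z - p z) k = 0) \<longleftrightarrow>
           p \<alpha> = \<alpha> * f \<alpha> \<and> deriv p \<alpha> = f \<alpha> + \<alpha> * deriv f \<alpha>"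
proof -
  have "(\<lambda>z. z * f z - p z) holomorphic_on ball 0 1"
    by (intro holomorphic_intros assms)
  moreover have "deriv (\<lambda>z. z * f z - p z) \<alpha> = f \<alpha> + \<alpha> * deriv f \<alpha> - deriv p \<alpha>"
    using assms by (intro deriv_mult_id_minus) auto
  ultimately have inner: "h2_inner (\<lambda>z. z * f z - p z) (model_fun \<alpha> a b) =
      cnj a * (\<alpha> * f \<alpha> - p \<alpha>) + cnj b * (f \<alpha> + \<alpha> * deriv f \<alpha> - deriv p \<alpha>)" for a b
    by (simp only: h2_inner_model_fun_right[OF assms(1)])
  show ?thesis
  proof
    assume "\<forall>k\<in>model_space (blaschke_sq \<alpha>). h2_inner (\<lambda>z. z * f z - p z) k = 0"
    then have "h2_inner (\<lambda>z. z * f z - p z) (model_fun \<alpha> 1 0) = 0"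
              "h2_inner (\<lambda>z. z * f z - p z) (model_fun \<alpha> 0 1) = 0"
      using model_fun_in_model_space[OF assms(1)] by blast+
    then show "p \<alpha> = \<alpha> * f \<alpha> \<and> deriv p \<alpha> = f \<alpha> + \<alpha> * deriv f \<alpha>"
      unfolding inner by simp
  next
    assume "p \<alpha> = \<alpha> * f \<alpha> \<and> deriv p \<alpha> = f \<alpha> + \<alpha> * deriv f \<alpha>"
    then have "h2_inner (\<lambda>z. z * f z - p z) (model_fun \<alpha> a b) = 0" for a b
      unfolding inner by simp
    then show "\<forall>k\<in>model_space (blaschke_sq \<alpha>). h2_inner (\<lambda>z. z * f z - p z) k = 0"
      unfolding Ball_def model_space_blaschke_sq_iff[OF assms(1)] by blast
  qed
qed

lemma compressed_shift_model_vec: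
  assumes "cmod \<alpha> < 1"
  shows "compressed_shift (blaschke_sq \<alpha>) (model_vec \<alpha> x y)
           = model_vec \<alpha> (\<alpha> * x) (of_real (defect \<alpha>) * x + \<alpha> * y)"
proof -
  define c where "c = (of_real (defect \<alpha>) :: complex)"
  define f where "f = model_vec \<alpha> x y"
  define Sf where "Sf = model_vec \<alpha> (\<alpha> * x) (c * x + \<alpha> * y)"
  have "c \<noteq> 0"
    using defect_pos[OF assms] by (simp add: c_def)
  have hol: "f holomorphic_on ball 0 1" "Sf holomorphic_on ball 0 1"
    unfolding f_def Sf_def model_vec_def by (simp_all add: holomorphic_model_fun[OF assms])
  have Sf: "Sf \<in> model_space (blaschke_sq \<alpha>)"
    unfolding Sf_def model_vec_def by (rule model_fun_in_model_space[OF assms])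
  have jet: "Sf \<alpha> = \<alpha> * f \<alpha>" "deriv Sf \<alpha> = f \<alpha> + \<alpha> * deriv f \<alpha>"
    unfolding f_def Sf_def model_vec_at_center[OF assms] deriv_model_vec_at_center[OF assms]
      c_def[symmetric]
    using \<open>c \<noteq> 0\<close> by (simp_all add: field_simps power2_eq_square)
  have "h2_proj (model_space (blaschke_sq \<alpha>)) (\<lambda>z. z * f z) = Sf"
  proof (rule h2_proj_eqI[OF Sf])
    show "\<forall>k\<in>model_space (blaschke_sq \<alpha>). h2_inner (\<lambda>z. z * f z - Sf z) k = 0"
      using shift_minus_orthogonal_model_space_iff[OF assms hol] jet by simp
    fix q
    assume q: "q \<in> model_space (blaschke_sq \<alpha>)"
      and "\<forall>k\<in>model_space (blaschke_sq \<alpha>). h2_inner (\<lambda>z. z * f z - q z) k = 0"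
    moreover have "q holomorphic_on ball 0 1"
      using q by (simp add: model_space_def hardy2_def)
    ultimately show "q = Sf"
      using shift_minus_orthogonal_model_space_iff[OF assms hol(1)] jet
      by (intro model_space_jet_inj[OF assms q Sf]) auto
  qed
  then show ?thesis
    by (simp add: compressed_shift_def f_def Sf_def c_def)
qed

lemma h2_inner_compressed_shift_model_vec:
  assumes "cmod \<alpha> < 1"
  shows "h2_inner (compressed_shift (blaschke_sq \<alpha>) (model_vec \<alpha> x y)) (model_vec \<alpha> x y) =
         \<alpha> * of_real ((cmod x)^2 + (cmod y)^2) + of_real (defect \<alpha>) * (x * cnj y)"
proof -
  have "h2_inner (compressed_shift (blaschke_sq \<alpha>) (model_vec \<alpha> x y)) (model_vec \<alpha> x y)
          = \<alpha> * (x * cnj x + y * cnj y) + of_real (defect \<alpha>) * (x * cnj y)"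
    unfolding compressed_shift_model_vec[OF assms] h2_inner_model_vec[OF assms] by (simp add: algebra_simps)
  then show ?thesis
    by (simp only: of_real_add complex_norm_square)
qed

lemma norm_add_scaled_product_le:
  fixes \<alpha> x y :: complex
  assumes "0 \<le> s" "(cmod x)^2 + (cmod y)^2 = 1"
  shows "cmod (\<alpha> + of_real s * (x * cnj y)) \<le> cmod \<alpha> + s / 2"
proof -
  have "0 \<le> (cmod x - cmod y)^2"
    by simp
  then have "2 * (cmod x * cmod y) \<le> (cmod x)^2 + (cmod y)^2"
    by (simp add: power2_diff)
  then have "s * (cmod x * cmod y) \<le> s / 2"
    using assms by (simp add: mult_left_mono[of _ "1/2" s, simplified])
  then show ?thesis
    using norm_triangle_ineq[of \<alpha> "of_real s * (x * cnj y)"] assms(1) by (simp add: norm_mult)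
qed

lemma norm_add_scaled_product_attained:
  fixes \<alpha> :: complex
  assumes "0 \<le> s"
  obtains x y where "(cmod x)^2 + (cmod y)^2 = 1" "cmod (\<alpha> + of_real s * (x * cnj y)) = cmod \<alpha> + s / 2"
proof
  define u where "u = (if \<alpha> = 0 then 1 else sgn \<alpha>)"
  have "cmod u = 1"
    by (simp add: u_def norm_sgn)
  have \<alpha>: "\<alpha> = of_real (cmod \<alpha>) * u"
    by (simp add: u_def complex_sgn_def scaleR_conv_of_real)
  define q where "q = sqrt (1/2)"
  have "q^2 = 1/2" "complex_of_real q * complex_of_real q = 1/2"
    by (simp_all add: q_def flip: of_real_mult)
  show "(cmod (u * of_real q))^2 + (cmod (of_real q))^2 = 1"
    using \<open>cmod u = 1\<close> \<open>q^2 = 1/2\<close> by (simp add: norm_mult power_mult_distrib)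
  have "\<alpha> + of_real s * (u * of_real q * cnj (of_real q)) = of_real (cmod \<alpha> + s / 2) * u"
    using \<open>complex_of_real q * complex_of_real q = 1/2\<close> by (subst \<alpha>) (simp add: algebra_simps)
  then show "cmod (\<alpha> + of_real s * (u * of_real q * cnj (of_real q))) = cmod \<alpha> + s / 2"
    using assms by (simp only: norm_mult norm_of_real \<open>cmod u = 1\<close>) simp
qed

lemma Sup_norm_add_scaled_product:
  fixes \<alpha> :: complex
  assumes "0 \<le> s"
  shows "Sup {cmod (\<alpha> + of_real s * (x * cnj y)) | x y. (cmod x)^2 + (cmod y)^2 = 1} = cmod \<alpha> + s / 2"
proof (rule cSup_eq_maximum)
  obtain x y where "(cmod x)^2 + (cmod y)^2 = 1" "cmod (\<alpha> + of_real s * (x * cnj y)) = cmod \<alpha> + s / 2"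
    using norm_add_scaled_product_attained[OF assms] .
  then show "cmod \<alpha> + s / 2 \<in> {cmod (\<alpha> + of_real s * (x * cnj y)) | x y. (cmod x)^2 + (cmod y)^2 = 1}"
    by (metis (mono_tags, lifting) mem_Collect_eq)
qed (use norm_add_scaled_product_le[OF assms] in blast)

lemma numerical_range_blaschke_sq:
  assumes "cmod \<alpha> < 1"
  shows "{cmod (h2_inner (compressed_shift (blaschke_sq \<alpha>) f) f) | f. f \<in> model_space (blaschke_sq \<alpha>) \<and> h2_norm f = 1}
       = {cmod (\<alpha> + of_real (defect \<alpha>) * (x * cnj y)) | x y. (cmod x)^2 + (cmod y)^2 = 1}"
proof -
  have form: "cmod (h2_inner (compressed_shift (blaschke_sq \<alpha>) (model_vec \<alpha> x y)) (model_vec \<alpha> x y))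
                 = cmod (\<alpha> + of_real (defect \<alpha>) * (x * cnj y))"
    if "(cmod x)^2 + (cmod y)^2 = 1" for x y
    using that by (simp add: h2_inner_compressed_shift_model_vec[OF assms])
  have unit: "h2_norm (model_vec \<alpha> x y) = 1 \<longleftrightarrow> (cmod x)^2 + (cmod y)^2 = 1" for x y
    by (simp add: h2_norm_model_vec[OF assms])
  show ?thesis
  proof (intro set_eqI iffI)
    fix r
    assume "r \<in> {cmod (h2_inner (compressed_shift (blaschke_sq \<alpha>) f) f) | f.
                    f \<in> model_space (blaschke_sq \<alpha>) \<and> h2_norm f = 1}"
    then obtain f where f: "f \<in> model_space (blaschke_sq \<alpha>)" "h2_norm f = 1"
      and r: "r = cmod (h2_inner (compressed_shift (blaschke_sq \<alpha>) f) f)"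
      by blast
    obtain x y where "f = model_vec \<alpha> x y"
      using f(1) model_space_blaschke_sq_iff_model_vec[OF assms] by blast
    with f(2) r form unit show "r \<in> {cmod (\<alpha> + of_real (defect \<alpha>) * (x * cnj y)) | x y. (cmod x)^2 + (cmod y)^2 = 1}"
      by auto
  next
    fix r
    assume "r \<in> {cmod (\<alpha> + of_real (defect \<alpha>) * (x * cnj y)) | x y. (cmod x)^2 + (cmod y)^2 = 1}"
    then obtain x y where xy: "(cmod x)^2 + (cmod y)^2 = 1"
      and r: "r = cmod (\<alpha> + of_real (defect \<alpha>) * (x * cnj y))"
      by blast
    have "model_vec \<alpha> x y \<in> model_space (blaschke_sq \<alpha>)" "h2_norm (model_vec \<alpha> x y) = 1"
      using model_space_blaschke_sq_iff_model_vec[OF assms] unit xy by blast+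
    moreover have "r = cmod (h2_inner (compressed_shift (blaschke_sq \<alpha>) (model_vec \<alpha> x y)) (model_vec \<alpha> x y))"
      using form[OF xy] r by simp
    ultimately show "r \<in> {cmod (h2_inner (compressed_shift (blaschke_sq \<alpha>) f) f) | f.
                    f \<in> model_space (blaschke_sq \<alpha>) \<and> h2_norm f = 1}"
      by blast
  qed
qed

theorem mainTheorem10:
  fixes \<alpha> :: complex
  assumes "cmod \<alpha> < 1"
  shows "numerical_radius (model_space (\<lambda>z. ((z - \<alpha>) / (1 - cnj \<alpha> * z))^2))
            (compressed_shift (\<lambda>z. ((z - \<alpha>) / (1 - cnj \<alpha> * z))^2))
         = (1 + 2 * cmod \<alpha> - (cmod \<alpha>)^2) / 2"
proof -
  have "numerical_radius (model_space (blaschke_sq \<alpha>)) (compressed_shift (blaschke_sq \<alpha>))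
          = cmod \<alpha> + defect \<alpha> / 2"
    unfolding numerical_radius_def numerical_range_blaschke_sq[OF assms]
    using Sup_norm_add_scaled_product defect_pos[OF assms] by simp
  then show ?thesis
    by (simp add: defect_def field_simps)
qed

end
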